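(* Suppose $c_1\ge-1$, $c_2\ge-1$, $c_3>\bar c_3(c_1,c_2)$. Then any $C^1$ solution $U$ of $(1-x^2)U'+2xU+\frac12U^2=P_c(x)$ in $(-1,1)$ other than $U^+$ and $U^-$ satisfies $U^-<U<U^+$ in $(-1,1)$, $U(-1)=\tau_1(c_1)$ and $U(1)=\tau_2'(c_2)$.
   Context: $P_c(x):=c_1(1-x)+c_2(1+x)+c_3(1-x^2)$; $\bar c_3(c_1,c_2):=-\frac12(\sqrt{1+c_1}+\sqrt{1+c_2})(\sqrt{1+c_1}+\sqrt{1+c_2}+2)$; $\tau_1(c_1):=2-2\sqrt{1+c_1}$, $\tau_2(c_1):=2+2\sqrt{1+c_1}$, $\tau_1'(c_2):=-2-2\sqrt{1+c_2}$, $\tau_2'(c_2):=-2+2\sqrt{1+c_2}$. $U^+$ denotes the solution on $(-1,1)$ which near $x=-1$ is given by a convergent power series $\tau_2(c_1)+\sum_{n\ge1}a_n(1+x)^n$, and $U^-$ the solution on $(-1,1)$ which near $x=1$ is given by a convergent power series $\tau_1'(c_2)+\sum_{n\ge1}b_n(1-x)^n$ (both exist on all of $(-1,1)$ under the hypotheses). $U(\pm1)$ denote one-sided limits. *)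

theory Defs
  imports "HOL-Analysis.Analysis"
begin

definition Pc :: "real \<Rightarrow> real \<Rightarrow> real \<Rightarrow> real \<Rightarrow> real" where
  "Pc c1 c2 c3 x = c1 * (1 - x) + c2 * (1 + x) + c3 * (1 - x^2)"

definition c3bar :: "real \<Rightarrow> real \<Rightarrow> real" where
  "c3bar c1 c2 = - (1/2) * (sqrt (1 + c1) + sqrt (1 + c2)) * (sqrt (1 + c1) + sqrt (1 + c2) + 2)"

definition tau1 :: "real \<Rightarrow> real" where "tau1 c1 = 2 - 2 * sqrt (1 + c1)"
definition tau2 :: "real \<Rightarrow> real" where "tau2 c1 = 2 + 2 * sqrt (1 + c1)"
definition tau1' :: "real \<Rightarrow> real" where "tau1' c2 = -2 - 2 * sqrt (1 + c2)"
definition tau2' :: "real \<Rightarrow> real" where "tau2' c2 = -2 + 2 * sqrt (1 + c2)"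

definition C1_solution :: "real \<Rightarrow> real \<Rightarrow> real \<Rightarrow> (real \<Rightarrow> real) \<Rightarrow> bool" where
  "C1_solution c1 c2 c3 U \<longleftrightarrow>
     (\<exists>U'. continuous_on {-1<..<1} U' \<and>
        (\<forall>x\<in>{-1<..<1}. (U has_real_derivative U' x) (at x) \<and>
           (1 - x^2) * U' x + 2 * x * U x + (1/2) * (U x)^2 = Pc c1 c2 c3 x))"

definition is_Uplus :: "real \<Rightarrow> real \<Rightarrow> real \<Rightarrow> (real \<Rightarrow> real) \<Rightarrow> bool" where
  "is_Uplus c1 c2 c3 U \<longleftrightarrow> C1_solution c1 c2 c3 U \<and>
     (\<exists>\<delta>>0. \<exists>a::nat \<Rightarrow> real. a 0 = tau2 c1 \<and>
        (\<forall>x. -1 < x \<and> x < -1 + \<delta> \<longrightarrow> (\<lambda>n. a n * (1 + x)^n) sums U x))"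

definition is_Uminus :: "real \<Rightarrow> real \<Rightarrow> real \<Rightarrow> (real \<Rightarrow> real) \<Rightarrow> bool" where
  "is_Uminus c1 c2 c3 U \<longleftrightarrow> C1_solution c1 c2 c3 U \<and>
     (\<exists>\<delta>>0. \<exists>b::nat \<Rightarrow> real. b 0 = tau1' c2 \<and>
        (\<forall>x. 1 - \<delta> < x \<and> x < 1 \<longrightarrow> (\<lambda>n. b n * (1 - x)^n) sums U x))"

end

theory Submission
  imports Defs
begin

text \<open>
  Two solutions of the Riccati equation \<open>(1 - x\<^sup>2) U' + 2 x U + U\<^sup>2/2 = P\<^sub>c(x)\<close> that agree at
  one point agree everywhere, since their difference satisfies a linear equation (Gronwall); so
  \<open>U\<close> lies strictly on one side of \<open>U\<^sup>+\<close>. The reciprocal gap \<open>v = 1 / (U\<^sup>+ - U)\<close> solves the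
  linear equation \<open>v' = A v - 1 / (2 (1 - x\<^sup>2))\<close> with \<open>A = (2 x + U\<^sup>+) / (1 - x\<^sup>2)\<close>, and
  \<open>U\<^sup>+(x) = 2 + 2 s + O(1 + x)\<close> with \<open>s = sqrt (1 + c\<^sub>1)\<close> gives \<open>A = 2 s / (1 - x\<^sup>2) + O(1)\<close>
  near \<open>-1\<close>. Against the integrating factor \<open>exp (- 2 s artanh x) = ((1 - x) / (1 + x))\<^sup>s\<close> of the
  principal part, a negative solution \<open>v\<close> is impossible and a nonnegative one tends to
  \<open>1 / (4 s)\<close> (to \<open>+\<infinity>\<close> if \<open>s = 0\<close>). Hence \<open>U < U\<^sup>+\<close> and \<open>U(-1) = U\<^sup>+(-1) - 4 s = \<tau>\<^sub>1(c\<^sub>1)\<close>.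
  The reflection \<open>U \<mapsto> -U(-x)\<close> swaps \<open>c\<^sub>1\<close> and \<open>c\<^sub>2\<close> and turns \<open>U\<^sup>-\<close> into a \<open>U\<^sup>+\<close>, which gives the
  statements at \<open>x = 1\<close>.
\<close>

section \<open>The Riccati equation\<close>

definition riccati_rhs :: "real \<Rightarrow> real \<Rightarrow> real \<Rightarrow> real \<Rightarrow> real \<Rightarrow> real" where
  "riccati_rhs c1 c2 c3 x u = (Pc c1 c2 c3 x - 2 * x * u - u^2 / 2) / (1 - x^2)"

lemma one_minus_square_pos: "x \<in> {-1<..<1} \<Longrightarrow> 0 < 1 - (x::real)^2"
  by (simp add: abs_square_less_1 abs_less_iff)

lemma C1_solution_has_real_derivative:
  assumes "C1_solution c1 c2 c3 U" "x \<in> {-1<..<1}"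
  shows "(U has_real_derivative riccati_rhs c1 c2 c3 x (U x)) (at x)"
proof -
  obtain U' where U': "(U has_real_derivative U' x) (at x)"
    and eq: "(1 - x^2) * U' x + 2 * x * U x + (1/2) * (U x)^2 = Pc c1 c2 c3 x"
    using assms unfolding C1_solution_def by blast
  have "U' x = riccati_rhs c1 c2 c3 x (U x)"
    using eq one_minus_square_pos[OF assms(2)] unfolding riccati_rhs_def by (simp add: field_simps)
  with U' show ?thesis by simp
qed

lemma C1_solution_continuous_on: "C1_solution c1 c2 c3 U \<Longrightarrow> continuous_on {-1<..<1} U"
  by (meson C1_solution_has_real_derivative DERIV_isCont continuous_at_imp_continuous_on)

lemma riccati_rhs_diff:
  "riccati_rhs c1 c2 c3 x v - riccati_rhs c1 c2 c3 x u = - (2 * x + (u + v) / 2) / (1 - x^2) * (v - u)"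
proof -
  have "(Pc c1 c2 c3 x - 2 * x * v - v^2 / 2) - (Pc c1 c2 c3 x - 2 * x * u - u^2 / 2)
      = - (2 * x + (u + v) / 2) * (v - u)"
    by (simp add: field_simps power2_eq_square)
  then show ?thesis unfolding riccati_rhs_def diff_divide_distrib[symmetric] by simp
qed

lemma C1_solution_reflect:
  assumes "C1_solution c1 c2 c3 U"
  shows "C1_solution c2 c1 c3 (\<lambda>x. - U (- x))"
proof -
  obtain U' where cont: "continuous_on {-1<..<1} U'"
    and U': "\<forall>x\<in>{-1<..<1}. (U has_real_derivative U' x) (at x) \<and>
               (1 - x^2) * U' x + 2 * x * U x + (1/2) * (U x)^2 = Pc c1 c2 c3 x"
    using assms unfolding C1_solution_def by blast
  show ?thesis unfolding C1_solution_def
  proof (intro exI[of _ "\<lambda>x. U' (- x)"] conjI ballI)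
    show "continuous_on {-1<..<1} (\<lambda>x. U' (- x))"
      by (rule continuous_on_compose2[OF cont]) (auto intro!: continuous_intros)
    fix x :: real assume "x \<in> {-1<..<1}"
    then have mx: "- x \<in> {-1<..<1}" by auto
    have "((\<lambda>x. U (- x)) has_real_derivative - U' (- x)) (at x)"
      using U' mx DERIV_mirror by blast
    then show "((\<lambda>x. - U (- x)) has_real_derivative U' (- x)) (at x)"
      using DERIV_minus by fastforce
    have "(1 - (- x)^2) * U' (- x) + 2 * (- x) * U (- x) + (1/2) * (U (- x))^2 = Pc c1 c2 c3 (- x)"
      using U' mx by blast
    then show "(1 - x^2) * U' (- x) + 2 * x * (- U (- x)) + (1/2) * (- U (- x))^2 = Pc c2 c1 c3 x"
      unfolding Pc_def by (simp add: algebra_simps)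
  qed
qed

lemma linear_ode_vanishing:
  fixes w g :: "real \<Rightarrow> real"
  assumes deriv: "\<forall>y\<in>{a<..<b}. (w has_real_derivative g y * w y) (at y)"
    and cont: "continuous_on {a<..<b} g"
    and x0: "x0 \<in> {a<..<b}" and x: "x \<in> {a<..<b}" and zero: "w x0 = 0"
  shows "w x = 0"
proof -
  let ?I = "{min x x0..max x x0}"
  have I: "?I \<subseteq> {a<..<b}" using x x0 by auto
  have "bounded (g ` ?I)"
    using continuous_on_subset[OF cont I] by (intro compact_imp_bounded compact_continuous_image) auto
  then obtain L where "\<forall>z\<in>g ` ?I. norm z \<le> L" unfolding bounded_iff by blast
  then have L: "\<forall>y\<in>?I. \<bar>g y\<bar> \<le> L" by auto
  \<comment> \<open>Gronwall: the energy \<open>w\<^sup>2\<close>, damped by \<open>exp (- 2 k y)\<close>, is monotone once \<open>k\<close> dominates \<open>g\<close>.\<close>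
  define E where "E k y = (w y)^2 * exp (- 2 * k * y)" for k y
  have E_deriv: "(E k has_real_derivative 2 * (g y - k) * E k y) (at y)" if "y \<in> ?I" for k y
    unfolding E_def using I that
    by (auto intro!: derivative_eq_intros deriv[rule_format] simp: algebra_simps power2_eq_square)
  have "E L x \<le> E L x0 \<or> E (- L) x \<le> E (- L) x0"
  proof (cases "x0 \<le> x")
    case True
    have "E L x \<le> E L x0"
    proof (rule DERIV_nonpos_imp_nonincreasing[OF True])
      fix y assume "x0 \<le> y" "y \<le> x"
      then have "y \<in> ?I" by auto
      moreover have "g y \<le> L" using L \<open>y \<in> ?I\<close> abs_le_D1 by blast
      then have "2 * (g y - L) * E L y \<le> 0"
        by (intro mult_nonpos_nonneg[of "2 * (g y - L)"]) (auto simp: E_def)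
      ultimately show "\<exists>D. (E L has_real_derivative D) (at y) \<and> D \<le> 0"
        using E_deriv by blast
    qed
    then show ?thesis ..
  next
    case False
    then have "x \<le> x0" by simp
    have "E (- L) x \<le> E (- L) x0"
    proof (rule DERIV_nonneg_imp_nondecreasing[OF \<open>x \<le> x0\<close>])
      fix y assume "x \<le> y" "y \<le> x0"
      then have "y \<in> ?I" by auto
      moreover have "- L \<le> g y" using L \<open>y \<in> ?I\<close> abs_le_D2 minus_le_iff by blast
      then have "2 * (g y - - L) * E (- L) y \<ge> 0"
        by (intro mult_nonneg_nonneg[of "2 * (g y - - L)"]) (auto simp: E_def)
      ultimately show "\<exists>D. (E (- L) has_real_derivative D) (at y) \<and> D \<ge> 0"
        using E_deriv by blast
    qed
    then show ?thesis ..
  qed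
  then show ?thesis using zero unfolding E_def by (auto simp: mult_le_0_iff)
qed

lemma C1_solution_unique:
  assumes U: "C1_solution c1 c2 c3 U" and V: "C1_solution c1 c2 c3 V"
    and "x0 \<in> {-1<..<1}" "x \<in> {-1<..<1}" "U x0 = V x0"
  shows "U x = V x"
proof -
  let ?g = "\<lambda>y. - (2 * y + (U y + V y) / 2) / (1 - y^2)"
  have "V x - U x = 0"
  proof (rule linear_ode_vanishing[where w = "\<lambda>y. V y - U y" and g = ?g])
    show "\<forall>y\<in>{-1<..<1}. ((\<lambda>y. V y - U y) has_real_derivative ?g y * (V y - U y)) (at y)"
      using riccati_rhs_diff
      by (metis C1_solution_has_real_derivative DERIV_diff U V)
    have "1 - y^2 \<noteq> 0" if "y \<in> {-1<..<1}" for y :: real using one_minus_square_pos[OF that] by simp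
    then show "continuous_on {-1<..<1} ?g"
      using C1_solution_continuous_on[OF U] C1_solution_continuous_on[OF V]
      by (intro continuous_intros) auto
  qed (use assms in auto)
  then show ?thesis by simp
qed

lemma C1_solutions_ordered:
  assumes U: "C1_solution c1 c2 c3 U" and V: "C1_solution c1 c2 c3 V"
    and "\<exists>x\<in>{-1<..<1}. U x \<noteq> V x"
  shows "(\<forall>x\<in>{-1<..<1}. U x < V x) \<or> (\<forall>x\<in>{-1<..<1}. V x < U x)"
proof (rule ccontr)
  assume "\<not> ?thesis"
  then obtain p q where pq: "p \<in> {-1<..<1}" "q \<in> {-1<..<1}" "V p - U p \<le> 0" "0 \<le> V q - U q"
    by (auto simp: not_less)
  have "connected ((\<lambda>x. V x - U x) ` {-1<..<1})"
    using C1_solution_continuous_on[OF U] C1_solution_continuous_on[OF V]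
    by (intro connected_continuous_image continuous_intros) auto
  then have "0 \<in> (\<lambda>x. V x - U x) ` {-1<..<1}"
    using pq unfolding connected_iff_interval by blast
  then obtain z where "z \<in> {-1<..<1}" "U z = V z" by auto
  then show False using assms C1_solution_unique[OF U V] by blast
qed

lemma C1_solution_inverse_diff_has_real_derivative:
  assumes W: "C1_solution c1 c2 c3 W" and U: "C1_solution c1 c2 c3 U"
    and y: "y \<in> {-1<..<1}" and ne: "W y \<noteq> U y"
  shows "((\<lambda>x. inverse (W x - U x)) has_real_derivative
           (2 * y + W y) / (1 - y^2) * inverse (W y - U y) - 1 / (2 * (1 - y^2))) (at y)"
proof -
  have "((\<lambda>x. W x - U x) has_real_derivative riccati_rhs c1 c2 c3 y (W y) - riccati_rhs c1 c2 c3 y (U y)) (at y)"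
    using C1_solution_has_real_derivative[OF W y] C1_solution_has_real_derivative[OF U y] by (rule DERIV_diff)
  then have "((\<lambda>x. inverse (W x - U x)) has_real_derivative
      - (inverse (W y - U y) * (riccati_rhs c1 c2 c3 y (W y) - riccati_rhs c1 c2 c3 y (U y)) * inverse (W y - U y))) (at y)"
    using ne by (intro DERIV_inverse') auto
  moreover have "- (inverse d * (- (2 * y + (U y + W y) / 2) / q * d) * inverse d)
      = (2 * y + W y) / q * inverse d - 1 / (2 * q)" if "d = W y - U y" "q = 1 - y^2" for d q
  proof -
    have "d \<noteq> 0" "q \<noteq> 0" "W y = U y + d" using that ne one_minus_square_pos[OF y] by auto
    then show ?thesis by (simp add: field_simps)
  qed
  ultimately show ?thesis unfolding riccati_rhs_diff by simp
qed

section \<open>A linear equation with coefficient singular at \<open>-1\<close>\<close>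

lemma eventually_at_right_Ioo:
  fixes a b :: real
  assumes "a < b"
  shows "eventually (\<lambda>x. x \<in> {a<..<b}) (at_right a)"
  by (rule eventually_at_rightI[OF _ assms])

lemma linear_ode_filterlim_at_top:
  fixes v A :: "real \<Rightarrow> real"
  assumes b: "-1 < b" "b \<le> 1"
    and deriv: "\<forall>y\<in>{-1<..<b}. (v has_real_derivative A y * v y - 1 / (2 * (1 - y^2))) (at y)"
    and sign: "\<forall>y\<in>{-1<..<b}. (A y + k) * v y \<le> 0"
  shows "filterlim v at_top (at_right (-1))"
proof -
  define m where "m = exp (- \<bar>k\<bar>)"
  define x0 where "x0 = (b - 1) / 2"
  have x0: "-1 < x0" "x0 < b" using b by (auto simp: x0_def)
  \<comment> \<open>\<open>(v y exp (k y))' \<le> - exp (k y) / (2 (1 - y\<^sup>2))\<close> and \<open>exp (k y) \<ge> m\<close>, so \<open>h\<close> is nonincreasing,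
    while \<open>artanh\<close> tends to \<open>-\<infinity>\<close> at \<open>-1\<close>.\<close>
  define h where "h y = v y * exp (k * y) + m / 2 * artanh y" for y
  have h_mono: "h x0 \<le> h x" if "x \<in> {-1<..<x0}" for x
  proof (rule DERIV_nonpos_imp_nonincreasing[of x x0 h])
    show "x \<le> x0" using that by simp
    fix y assume "x \<le> y" "y \<le> x0"
    then have yb: "y \<in> {-1<..<b}" and y: "y \<in> {-1<..<1}" using that x0 b by auto
    have q: "1 - y^2 > 0" using one_minus_square_pos[OF y] .
    have "(h has_real_derivative (A y * v y - 1 / (2 * (1 - y^2))) * exp (k * y)
             + v y * (exp (k * y) * k) + m / 2 * (1 / (1 - y^2))) (at y)"
      unfolding h_def using deriv yb y
      by (intro derivative_eq_intros artanh_real_has_field_derivative) auto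
    moreover have "(A y * v y - 1 / (2 * q)) * exp (k * y) + v y * (exp (k * y) * k) + m / 2 * (1 / q)
        = exp (k * y) * ((A y + k) * v y) + (m - exp (k * y)) / (2 * q)" if "q \<noteq> 0" for q
      using that by (simp add: field_simps)
    ultimately have "(h has_real_derivative
        exp (k * y) * ((A y + k) * v y) + (m - exp (k * y)) / (2 * (1 - y^2))) (at y)"
      using q by (metis less_irrefl)
    moreover have "exp (k * y) * ((A y + k) * v y) \<le> 0"
      using sign yb by (simp add: mult_nonneg_nonpos)
    moreover have "\<bar>k * y\<bar> \<le> \<bar>k\<bar>"
      using y unfolding abs_mult by (intro mult_left_le) auto
    then have "(m - exp (k * y)) / (2 * (1 - y^2)) \<le> 0"
      using q unfolding m_def by (intro divide_nonpos_pos) auto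
    ultimately show "\<exists>D. (h has_real_derivative D) (at y) \<and> D \<le> 0" by force
  qed
  have "0 < m / 2" by (simp add: m_def)
  moreover have "filterlim (\<lambda>x::real. - artanh x) at_top (at_right (-1))"
    using artanh_real_at_right_1 by (simp add: filterlim_uminus_at_bot)
  ultimately have "filterlim (\<lambda>x. m / 2 * - artanh x) at_top (at_right (-1))"
    by (rule filterlim_tendsto_pos_mult_at_top[OF tendsto_const])
  from filterlim_tendsto_add_at_top[OF tendsto_const this]
  have "filterlim (\<lambda>x. h x0 + m / 2 * - artanh x) at_top (at_right (-1))" .
  moreover have "eventually (\<lambda>x. h x0 + m / 2 * - artanh x \<le> v x * exp (k * x)) (at_right (-1))"
    using eventually_at_right_Ioo[OF x0(1)]
  proof eventually_elim
    case (elim x)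
    show ?case using h_mono[OF elim] by (simp add: h_def)
  qed
  ultimately have vexp: "filterlim (\<lambda>x. v x * exp (k * x)) at_top (at_right (-1))"
    by (rule filterlim_at_top_mono)
  have "((\<lambda>x. exp (- k * x)) \<longlongrightarrow> exp (- k * - 1)) (at_right (-1))"
    by (intro tendsto_intros)
  from filterlim_tendsto_pos_mult_at_top[OF this _ vexp]
  have "filterlim (\<lambda>x. exp (- k * x) * (v x * exp (k * x))) at_top (at_right (-1))"
    by simp
  moreover have "exp (- k * x) * (v x * exp (k * x)) = v x" for x
    by (simp add: exp_minus field_simps)
  ultimately show ?thesis by (simp only:)
qed

lemma exp_linear_plus_artanh_tendsto_0:
  fixes C s :: real
  assumes "s > 0"
  shows "((\<lambda>x. exp (2 * s * artanh x + C * x)) \<longlongrightarrow> 0) (at_right (-1))"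
proof -
  have "((\<lambda>x. C * x) \<longlongrightarrow> C * - 1) (at_right (-1))"
    by (intro tendsto_intros)
  moreover have "filterlim (\<lambda>x. 2 * s * artanh x) at_bot (at_right (-1))"
    using assms by (intro filterlim_tendsto_pos_mult_at_bot[OF tendsto_const _ artanh_real_at_right_1]) simp
  ultimately have "filterlim (\<lambda>x. C * x + 2 * s * artanh x) at_bot (at_right (-1))"
    by (rule filterlim_tendsto_add_at_bot_iff[THEN iffD2])
  then have "filterlim (\<lambda>x. 2 * s * artanh x + C * x) at_bot (at_right (-1))"
    by (simp add: add.commute)
  then show ?thesis by (rule filterlim_compose[OF exp_at_bot])
qed

text \<open>\<open>exp (- 2 s artanh x)\<close> is an integrating factor for the principal part \<open>2 s / (1 - x\<^sup>2)\<close> of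
  the coefficient; the shift by \<open>exp (k x0) / (4 s)\<close> leaves a remainder of definite sign.\<close>

lemma linear_ode_weighted_gap_has_real_derivative:
  fixes v A :: "real \<Rightarrow> real"
  assumes y: "y \<in> {-1<..<1}" and s: "s \<noteq> 0"
    and deriv: "(v has_real_derivative A y * v y - 1 / (2 * (1 - y^2))) (at y)"
  shows "((\<lambda>x. (v x * exp (k * x) - exp (k * x0) / (4 * s)) * exp (- 2 * s * artanh x)) has_real_derivative
      exp (- 2 * s * artanh y) * (exp (k * y) * ((A y + k - 2 * s / (1 - y^2)) * v y)
        + (exp (k * x0) - exp (k * y)) / (2 * (1 - y^2)))) (at y)"
proof -
  have q: "1 - y^2 \<noteq> 0" using one_minus_square_pos[OF y] by simp
  have "((\<lambda>x. (v x * exp (k * x) - exp (k * x0) / (4 * s)) * exp (- 2 * s * artanh x)) has_real_derivative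
      ((A y * v y - 1 / (2 * (1 - y^2))) * exp (k * y) + v y * (exp (k * y) * k))
        * exp (- 2 * s * artanh y)
      + (v y * exp (k * y) - exp (k * x0) / (4 * s)) * (exp (- 2 * s * artanh y) * (- 2 * s * (1 / (1 - y^2))))) (at y)"
    by (intro derivative_eq_intros artanh_real_has_field_derivative) (use y deriv in \<open>auto simp: mult_ac\<close>)
  moreover have "((A y * v y - 1 / (2 * q)) * e + v y * (e * k)) * p
      + (v y * e - f / (4 * s)) * (p * (- 2 * s * (1 / q)))
      = p * (e * ((A y + k - 2 * s / q) * v y) + (f - e) / (2 * q))" if "q \<noteq> 0" for q e f p
    using that s by (simp add: field_simps)
  ultimately show ?thesis using q by (metis (no_types, lifting))
qed

lemma weighted_gap_identity:
  fixes s :: real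
  assumes "s \<noteq> 0"
  shows "u = exp (k * (x0 - x)) / (4 * s)
    + (u * exp (k * x) - exp (k * x0) / (4 * s)) * exp (- 2 * s * a) * exp (2 * s * a - k * x)"
proof -
  have "exp (- 2 * s * a) * exp (2 * s * a - k * x) = exp (- k * x)"
    by (simp flip: exp_add)
  moreover have "exp (k * x) * exp (- k * x) = 1" "exp (k * x0) * exp (- k * x) = exp (k * (x0 - x))"
    by (simp_all add: algebra_simps flip: exp_add)
  ultimately show ?thesis
    using assms by (simp add: algebra_simps)
qed

lemma linear_ode_lower_bound:
  fixes v A :: "real \<Rightarrow> real"
  assumes x0: "x0 \<in> {-1<..<b}" and b: "b \<le> 1" and s: "s > 0" and K: "K \<ge> 0"
    and deriv: "\<forall>y\<in>{-1<..<b}. (v has_real_derivative A y * v y - 1 / (2 * (1 - y^2))) (at y)"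
    and bound: "\<forall>y\<in>{-1<..<b}. A y - 2 * s / (1 - y^2) \<le> K"
    and nonneg: "\<forall>y\<in>{-1<..<b}. 0 \<le> v y"
  shows "\<exists>H. \<forall>x\<in>{-1<..x0}. exp (K * (x - x0)) / (4 * s) + H * exp (2 * s * artanh x + K * x) \<le> v x"
proof -
  define h where "h x = (v x * exp (- K * x) - exp (- K * x0) / (4 * s)) * exp (- 2 * s * artanh x)" for x
  have mono: "h x0 \<le> h x" if x: "x \<in> {-1<..x0}" for x
  proof (rule DERIV_nonpos_imp_nonincreasing[of x x0 h])
    show "x \<le> x0" using x by simp
    fix y assume "x \<le> y" "y \<le> x0"
    then have yb: "y \<in> {-1<..<b}" and y: "y \<in> {-1<..<1}" using x x0 b by auto
    have "A y - 2 * s / (1 - y^2) \<le> K" "0 \<le> v y" using bound nonneg yb by auto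
    then have "exp (- K * y) * ((A y + - K - 2 * s / (1 - y^2)) * v y) \<le> 0"
      by (intro mult_nonneg_nonpos[OF _ mult_nonpos_nonneg]) auto
    moreover have "(exp (- K * x0) - exp (- K * y)) / (2 * (1 - y^2)) \<le> 0"
      using K \<open>y \<le> x0\<close> one_minus_square_pos[OF y] by (intro divide_nonpos_pos) (auto simp: mult_left_mono)
    ultimately have "exp (- 2 * s * artanh y) * (exp (- K * y) * ((A y + - K - 2 * s / (1 - y^2)) * v y)
        + (exp (- K * x0) - exp (- K * y)) / (2 * (1 - y^2))) \<le> 0"
      by (intro mult_nonneg_nonpos) auto
    then show "\<exists>D. (h has_real_derivative D) (at y) \<and> D \<le> 0"
      using linear_ode_weighted_gap_has_real_derivative[of y s v A "- K" x0,
          OF y _ deriv[rule_format, OF yb]] s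
      unfolding h_def by fastforce
  qed
  show ?thesis
  proof (intro exI[of _ "h x0"] ballI)
    fix x assume "x \<in> {-1<..x0}"
    then have "h x0 * exp (2 * s * artanh x + K * x) \<le> h x * exp (2 * s * artanh x + K * x)"
      by (intro mult_right_mono mono) auto
    moreover have "v x = exp (K * (x - x0)) / (4 * s) + h x * exp (2 * s * artanh x + K * x)"
      using weighted_gap_identity[of s "v x" "- K" x0 x "artanh x"] s unfolding h_def
      by (simp add: algebra_simps)
    ultimately show "exp (K * (x - x0)) / (4 * s) + h x0 * exp (2 * s * artanh x + K * x) \<le> v x"
      by linarith
  qed
qed

lemma linear_ode_upper_bound:
  fixes v A :: "real \<Rightarrow> real"
  assumes x0: "x0 \<in> {-1<..<b}" and b: "b \<le> 1" and s: "s > 0" and K: "K \<ge> 0"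
    and deriv: "\<forall>y\<in>{-1<..<b}. (v has_real_derivative A y * v y - 1 / (2 * (1 - y^2))) (at y)"
    and bound: "\<forall>y\<in>{-1<..<b}. - K \<le> A y - 2 * s / (1 - y^2)"
    and nonneg: "\<forall>y\<in>{-1<..<b}. 0 \<le> v y"
  shows "\<exists>H. \<forall>x\<in>{-1<..x0}. v x \<le> exp (K * (x0 - x)) / (4 * s) + H * exp (2 * s * artanh x - K * x)"
proof -
  define h where "h x = (v x * exp (K * x) - exp (K * x0) / (4 * s)) * exp (- 2 * s * artanh x)" for x
  have mono: "h x \<le> h x0" if x: "x \<in> {-1<..x0}" for x
  proof (rule DERIV_nonneg_imp_nondecreasing[of x x0 h])
    show "x \<le> x0" using x by simp
    fix y assume "x \<le> y" "y \<le> x0"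
    then have yb: "y \<in> {-1<..<b}" and y: "y \<in> {-1<..<1}" using x x0 b by auto
    have "- K \<le> A y - 2 * s / (1 - y^2)" "0 \<le> v y" using bound nonneg yb by auto
    then have "0 \<le> exp (K * y) * ((A y + K - 2 * s / (1 - y^2)) * v y)"
      by (intro mult_nonneg_nonneg[OF _ mult_nonneg_nonneg]) auto
    moreover have "0 \<le> (exp (K * x0) - exp (K * y)) / (2 * (1 - y^2))"
      using K \<open>y \<le> x0\<close> one_minus_square_pos[OF y] by (intro divide_nonneg_pos) (auto simp: mult_left_mono)
    ultimately have "0 \<le> exp (- 2 * s * artanh y) * (exp (K * y) * ((A y + K - 2 * s / (1 - y^2)) * v y)
        + (exp (K * x0) - exp (K * y)) / (2 * (1 - y^2)))"
      by (intro mult_nonneg_nonneg) auto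
    then show "\<exists>D. (h has_real_derivative D) (at y) \<and> 0 \<le> D"
      using linear_ode_weighted_gap_has_real_derivative[of y s v A K x0,
          OF y _ deriv[rule_format, OF yb]] s
      unfolding h_def by fastforce
  qed
  show ?thesis
  proof (intro exI[of _ "h x0"] ballI)
    fix x assume "x \<in> {-1<..x0}"
    then have "h x * exp (2 * s * artanh x - K * x) \<le> h x0 * exp (2 * s * artanh x - K * x)"
      by (intro mult_right_mono mono) auto
    moreover have "v x = exp (K * (x0 - x)) / (4 * s) + h x * exp (2 * s * artanh x - K * x)"
      using weighted_gap_identity[of s "v x" K x0 x "artanh x"] s unfolding h_def by simp
    ultimately show "v x \<le> exp (K * (x0 - x)) / (4 * s) + h x0 * exp (2 * s * artanh x - K * x)"
      by linarith
  qed
qed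

lemma linear_ode_tendsto:
  fixes v A :: "real \<Rightarrow> real"
  assumes b: "-1 < b" "b \<le> 1" and s: "s > 0" and K: "K \<ge> 0"
    and deriv: "\<forall>y\<in>{-1<..<b}. (v has_real_derivative A y * v y - 1 / (2 * (1 - y^2))) (at y)"
    and bound: "\<forall>y\<in>{-1<..<b}. \<bar>A y - 2 * s / (1 - y^2)\<bar> \<le> K"
    and nonneg: "\<forall>y\<in>{-1<..<b}. 0 \<le> v y"
  shows "(v \<longlongrightarrow> 1 / (4 * s)) (at_right (-1))"
proof (rule order_tendstoI)
  \<comment> \<open>The bounds from a base point \<open>x0\<close> tend to \<open>exp (\<plusminus>K (1 + x0)) / (4 s)\<close> at \<open>-1\<close>;
    \<open>x0\<close> is chosen close enough to \<open>-1\<close>.\<close>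
  fix a assume a: "a < 1 / (4 * s)"
  have "((\<lambda>x0. exp (K * (- 1 - x0)) / (4 * s)) \<longlongrightarrow> exp (K * (- 1 - - 1)) / (4 * s)) (at_right (-1))"
    using s by (intro tendsto_intros) simp_all
  with a have "eventually (\<lambda>x0. a < exp (K * (-1 - x0)) / (4 * s)) (at_right (-1))"
    using order_tendstoD(1) by fastforce
  then have "eventually (\<lambda>x0. a < exp (K * (-1 - x0)) / (4 * s) \<and> x0 \<in> {-1<..<b}) (at_right (-1))"
    using eventually_at_right_Ioo[OF b(1)] by (rule eventually_conj)
  then obtain x0 where x0: "x0 \<in> {-1<..<b}" "a < exp (K * (-1 - x0)) / (4 * s)"
    using eventually_happens'[OF trivial_limit_at_right_real] by blast
  then have "-1 < x0" by simp
  obtain H where H: "\<forall>x\<in>{-1<..x0}. exp (K * (x - x0)) / (4 * s) + H * exp (2 * s * artanh x + K * x) \<le> v x"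
    using linear_ode_lower_bound[OF x0(1) b(2) s K deriv _ nonneg] bound abs_le_D1 by blast
  have "((\<lambda>x. exp (K * (x - x0)) / (4 * s) + H * exp (2 * s * artanh x + K * x))
      \<longlongrightarrow> exp (K * (-1 - x0)) / (4 * s) + H * 0) (at_right (-1))"
    using s by (intro tendsto_intros exp_linear_plus_artanh_tendsto_0) simp_all
  from order_tendstoD(1)[OF this] x0(2)
  have "eventually (\<lambda>x. a < exp (K * (x - x0)) / (4 * s) + H * exp (2 * s * artanh x + K * x)) (at_right (-1))"
    by simp
  then show "eventually (\<lambda>x. a < v x) (at_right (-1))"
    using eventually_at_right_Ioo[OF \<open>-1 < x0\<close>] by eventually_elim (use H in force)
next
  fix a assume a: "1 / (4 * s) < a"
  have "((\<lambda>x0. exp (K * (x0 + 1)) / (4 * s)) \<longlongrightarrow> exp (K * (- 1 + 1)) / (4 * s)) (at_right (-1))"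
    using s by (intro tendsto_intros) simp_all
  with a have "eventually (\<lambda>x0. exp (K * (x0 + 1)) / (4 * s) < a) (at_right (-1))"
    using order_tendstoD(2) by fastforce
  then have "eventually (\<lambda>x0. exp (K * (x0 + 1)) / (4 * s) < a \<and> x0 \<in> {-1<..<b}) (at_right (-1))"
    using eventually_at_right_Ioo[OF b(1)] by (rule eventually_conj)
  then obtain x0 where x0: "x0 \<in> {-1<..<b}" "exp (K * (x0 + 1)) / (4 * s) < a"
    using eventually_happens'[OF trivial_limit_at_right_real] by blast
  then have "-1 < x0" by simp
  obtain H where H: "\<forall>x\<in>{-1<..x0}. v x \<le> exp (K * (x0 - x)) / (4 * s) + H * exp (2 * s * artanh x - K * x)"
    using linear_ode_upper_bound[OF x0(1) b(2) s K deriv _ nonneg] bound abs_le_D2 minus_le_iff by blast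
  have "((\<lambda>x. exp (K * (x0 - x)) / (4 * s) + H * exp (2 * s * artanh x + - K * x))
      \<longlongrightarrow> exp (K * (x0 - -1)) / (4 * s) + H * 0) (at_right (-1))"
    using s by (intro tendsto_intros exp_linear_plus_artanh_tendsto_0) simp_all
  from order_tendstoD(2)[OF this] x0(2)
  have "eventually (\<lambda>x. exp (K * (x0 - x)) / (4 * s) + H * exp (2 * s * artanh x - K * x) < a) (at_right (-1))"
    by simp
  then show "eventually (\<lambda>x. v x < a) (at_right (-1))"
    using eventually_at_right_Ioo[OF \<open>-1 < x0\<close>] by eventually_elim (use H in force)
qed

section \<open>The solution \<open>U\<^sup>+\<close> near \<open>-1\<close>\<close>

lemma powser_sums_Lipschitz_at_0:
  fixes a :: "nat \<Rightarrow> real"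
  assumes "\<delta> > 0" and sums: "\<forall>t\<in>{0<..<\<delta>}. (\<lambda>n. a n * t^n) sums f t"
  shows "\<exists>M\<ge>0. eventually (\<lambda>t. \<bar>f t - a 0\<bar> \<le> M * t) (at_right 0)"
proof -
  define g where "g t = (\<Sum>n. a n * t^n)" for t
  have "summable (\<lambda>n. a n * (\<delta>/2)^n)"
    using sums \<open>\<delta> > 0\<close> by (auto simp: sums_iff)
  then have "(g has_field_derivative (\<Sum>n. diffs a n * 0^n)) (at 0)"
    unfolding g_def by (rule termdiffs_strong) (use assms in auto)
  then obtain D where "((\<lambda>t. (g t - g 0) / t) \<longlongrightarrow> D) (at 0)"
    unfolding DERIV_def by auto
  from tendsto_rabs[OF this]
  have "((\<lambda>t. \<bar>(g t - g 0) / t\<bar>) \<longlongrightarrow> \<bar>D\<bar>) (at_right 0)"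
    by (rule tendsto_mono[OF at_within_le_at])
  then have "eventually (\<lambda>t. \<bar>(g t - g 0) / t\<bar> < \<bar>D\<bar> + 1) (at_right 0)"
    by (rule order_tendstoD) simp
  then have "eventually (\<lambda>t. \<bar>f t - a 0\<bar> \<le> (\<bar>D\<bar> + 1) * t) (at_right 0)"
    using eventually_at_right_Ioo[OF \<open>\<delta> > 0\<close>]
  proof eventually_elim
    case (elim t)
    then have "f t = g t" using sums unfolding g_def by (auto simp: sums_iff)
    moreover have "g 0 = a 0" unfolding g_def by simp
    ultimately show ?case using elim by (simp add: abs_divide pos_divide_less_eq)
  qed
  then show ?thesis by (intro exI[of _ "\<bar>D\<bar> + 1"]) auto
qed

lemma is_Uplus_Lipschitz_at_minus_one:
  assumes "is_Uplus c1 c2 c3 Up"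
  shows "\<exists>M\<ge>0. eventually (\<lambda>x. \<bar>Up x - tau2 c1\<bar> \<le> M * (1 + x)) (at_right (-1))"
proof -
  obtain \<delta> a where "\<delta> > 0" "a 0 = tau2 c1"
    and sums: "\<forall>x. -1 < x \<and> x < -1 + \<delta> \<longrightarrow> (\<lambda>n. a n * (1 + x)^n) sums Up x"
    using assms unfolding is_Uplus_def by blast
  have "\<forall>t\<in>{0<..<\<delta>}. (\<lambda>n. a n * t^n) sums Up (t - 1)"
    using sums by (auto dest: spec[of _ "_ - 1"])
  from powser_sums_Lipschitz_at_0[OF \<open>\<delta> > 0\<close> this] \<open>a 0 = tau2 c1\<close>
  obtain M e where "M \<ge> 0" "e > 0" and M: "\<forall>t>0. t < e \<longrightarrow> \<bar>Up (t - 1) - tau2 c1\<bar> \<le> M * t"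
    unfolding eventually_at_right_field by auto
  have "eventually (\<lambda>x. \<bar>Up x - tau2 c1\<bar> \<le> M * (1 + x)) (at_right (-1))"
    unfolding eventually_at_right_field
  proof (intro exI[of _ "-1 + e"] conjI allI impI)
    fix x :: real assume "-1 < x" "x < -1 + e"
    then show "\<bar>Up x - tau2 c1\<bar> \<le> M * (1 + x)" using M[rule_format, of "1 + x"] by simp
  qed (use \<open>e > 0\<close> in simp)
  with \<open>M \<ge> 0\<close> show ?thesis by blast
qed

lemma linearized_coefficient_bound:
  fixes f s M y :: real
  assumes y: "y \<in> {-1<..0}" and M: "M \<ge> 0" and f: "\<bar>f - (2 + 2 * s)\<bar> \<le> M * (1 + y)"
  shows "\<bar>(2 * y + f) / (1 - y^2) - 2 * s / (1 - y^2)\<bar> \<le> M + 2"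
proof -
  let ?N = "(f - (2 + 2 * s)) + 2 * (1 + y)"
  have pos: "0 < 1 + y" "1 \<le> 1 - y" using y by auto
  have "(2 * y + f) / (1 - y^2) - 2 * s / (1 - y^2) = ?N / ((1 + y) * (1 - y))"
    by (simp add: diff_divide_distrib[symmetric] power2_eq_square algebra_simps)
  then have "\<bar>(2 * y + f) / (1 - y^2) - 2 * s / (1 - y^2)\<bar> = \<bar>?N\<bar> / ((1 + y) * (1 - y))"
    using pos by (simp add: abs_divide abs_mult)
  also have "\<dots> \<le> (M + 2) * (1 + y) / ((1 + y) * (1 - y))"
  proof (rule divide_right_mono)
    show "\<bar>?N\<bar> \<le> (M + 2) * (1 + y)" using f pos by (simp add: abs_le_iff algebra_simps)
    show "0 \<le> (1 + y) * (1 - y)" using pos by simp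
  qed
  also have "\<dots> = (M + 2) / (1 - y)"
    using pos by simp
  also have "\<dots> \<le> M + 2"
    using pos M by (intro divide_left_mono[of 1, simplified]) auto
  finally show ?thesis .
qed

lemma is_Uplus_tendsto: "is_Uplus c1 c2 c3 Up \<Longrightarrow> (Up \<longlongrightarrow> tau2 c1) (at_right (-1))"
proof -
  assume "is_Uplus c1 c2 c3 Up"
  then obtain M where M: "eventually (\<lambda>x. \<bar>Up x - tau2 c1\<bar> \<le> M * (1 + x)) (at_right (-1))"
    using is_Uplus_Lipschitz_at_minus_one by blast
  have "((\<lambda>x. M * (1 + x)) \<longlongrightarrow> M * (1 + - 1)) (at_right (-1))"
    by (intro tendsto_intros)
  then have lim: "((\<lambda>x. M * (1 + x)) \<longlongrightarrow> 0) (at_right (-1))" by simp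
  have "((\<lambda>x. Up x - tau2 c1) \<longlongrightarrow> 0) (at_right (-1))"
    by (rule Lim_null_comparison[OF _ lim]) (use M in simp)
  then show ?thesis by (rule LIM_zero_cancel)
qed

lemma reciprocal_gap_linear_ode:
  assumes Up: "is_Uplus c1 c2 c3 Up" and U: "C1_solution c1 c2 c3 U"
    and ne: "\<forall>x\<in>{-1<..<1}. U x \<noteq> Up x"
  obtains b K A where "-1 < b" "b \<le> 0" "K \<ge> 0"
    "\<forall>y\<in>{-1<..<b}. ((\<lambda>x. inverse (Up x - U x)) has_real_derivative
        A y * inverse (Up y - U y) - 1 / (2 * (1 - y^2))) (at y)"
    "\<forall>y\<in>{-1<..<b}. \<bar>A y - 2 * sqrt (1 + c1) / (1 - y^2)\<bar> \<le> K"
proof -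
  obtain M where "M \<ge> 0" and "eventually (\<lambda>x. \<bar>Up x - tau2 c1\<bar> \<le> M * (1 + x)) (at_right (-1))"
    using is_Uplus_Lipschitz_at_minus_one[OF Up] by blast
  then obtain b' where "b' > -1" and M: "\<forall>x>-1. x < b' \<longrightarrow> \<bar>Up x - tau2 c1\<bar> \<le> M * (1 + x)"
    unfolding eventually_at_right_field by blast
  have "C1_solution c1 c2 c3 Up" using Up unfolding is_Uplus_def by blast
  show ?thesis
  proof (rule that[of "min b' 0" "M + 2" "\<lambda>y. (2 * y + Up y) / (1 - y^2)"])
    show "\<forall>y\<in>{-1<..<min b' 0}. ((\<lambda>x. inverse (Up x - U x)) has_real_derivative
        (2 * y + Up y) / (1 - y^2) * inverse (Up y - U y) - 1 / (2 * (1 - y^2))) (at y)"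
      using C1_solution_inverse_diff_has_real_derivative[OF \<open>C1_solution c1 c2 c3 Up\<close> U] ne by force
    show "\<forall>y\<in>{-1<..<min b' 0}. \<bar>(2 * y + Up y) / (1 - y^2) - 2 * sqrt (1 + c1) / (1 - y^2)\<bar> \<le> M + 2"
      using M \<open>M \<ge> 0\<close> by (auto intro!: linearized_coefficient_bound simp: tau2_def)
  qed (use \<open>b' > -1\<close> \<open>M \<ge> 0\<close> in auto)
qed

lemma C1_solution_below_Uplus:
  assumes c1: "c1 \<ge> -1" and Up: "is_Uplus c1 c2 c3 Up" and U: "C1_solution c1 c2 c3 U"
    and ne: "\<exists>x\<in>{-1<..<1}. U x \<noteq> Up x"
  shows "\<forall>x\<in>{-1<..<1}. U x < Up x"
proof (rule ccontr)
  assume "\<not> ?thesis"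
  moreover have "C1_solution c1 c2 c3 Up" using Up unfolding is_Uplus_def by blast
  ultimately have above: "\<forall>x\<in>{-1<..<1}. Up x < U x"
    using C1_solutions_ordered[OF U _ ne] by blast
  then have "\<forall>x\<in>{-1<..<1}. U x \<noteq> Up x" by force
  then obtain b K A where b: "-1 < b" "b \<le> 0" "K \<ge> 0"
    and deriv: "\<forall>y\<in>{-1<..<b}. ((\<lambda>x. inverse (Up x - U x)) has_real_derivative
        A y * inverse (Up y - U y) - 1 / (2 * (1 - y^2))) (at y)"
    and bound: "\<forall>y\<in>{-1<..<b}. \<bar>A y - 2 * sqrt (1 + c1) / (1 - y^2)\<bar> \<le> K"
    using reciprocal_gap_linear_ode[OF Up U] by blast
  have neg: "inverse (Up y - U y) < 0" if "y \<in> {-1<..<b}" for y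
    using above that b by auto
  have "filterlim (\<lambda>x. inverse (Up x - U x)) at_top (at_right (-1))"
  proof (rule linear_ode_filterlim_at_top[OF b(1) _ deriv, of K])
    show "\<forall>y\<in>{-1<..<b}. (A y + K) * inverse (Up y - U y) \<le> 0"
    proof
      fix y assume y: "y \<in> {-1<..<b}"
      have "0 \<le> 2 * sqrt (1 + c1) / (1 - y^2)"
        using c1 y b one_minus_square_pos[of y] by simp
      moreover have "\<bar>A y - 2 * sqrt (1 + c1) / (1 - y^2)\<bar> \<le> K" using bound y by blast
      ultimately have "0 \<le> A y + K" by linarith
      then show "(A y + K) * inverse (Up y - U y) \<le> 0"
        using neg[OF y] by (simp add: mult_nonneg_nonpos)
    qed
  qed (use b in simp)
  from this[unfolded filterlim_at_top_dense, rule_format, of 0]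
  have "eventually (\<lambda>x. 0 < inverse (Up x - U x)) (at_right (-1))" .
  moreover have "eventually (\<lambda>x. inverse (Up x - U x) < 0) (at_right (-1))"
    using eventually_at_right_Ioo[OF b(1)] by eventually_elim (rule neg)
  ultimately have "eventually (\<lambda>x. False) (at_right (-1::real))"
    by eventually_elim simp
  then show False by simp
qed

lemma C1_solution_gap_tendsto:
  assumes c1: "c1 \<ge> -1" and Up: "is_Uplus c1 c2 c3 Up" and U: "C1_solution c1 c2 c3 U"
    and below: "\<forall>x\<in>{-1<..<1}. U x < Up x"
  shows "((\<lambda>x. Up x - U x) \<longlongrightarrow> 4 * sqrt (1 + c1)) (at_right (-1))"
proof -
  have "\<forall>x\<in>{-1<..<1}. U x \<noteq> Up x" using below by force
  then obtain b K A where b: "-1 < b" "b \<le> 0" "K \<ge> 0"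
    and deriv: "\<forall>y\<in>{-1<..<b}. ((\<lambda>x. inverse (Up x - U x)) has_real_derivative
        A y * inverse (Up y - U y) - 1 / (2 * (1 - y^2))) (at y)"
    and bound: "\<forall>y\<in>{-1<..<b}. \<bar>A y - 2 * sqrt (1 + c1) / (1 - y^2)\<bar> \<le> K"
    using reciprocal_gap_linear_ode[OF Up U] by blast
  have pos: "0 < inverse (Up y - U y)" if "y \<in> {-1<..<b}" for y
    using below that b by simp
  have "((\<lambda>x. inverse (inverse (Up x - U x))) \<longlongrightarrow> 4 * sqrt (1 + c1)) (at_right (-1))"
  proof (cases "c1 = -1")
    case True
    have "filterlim (\<lambda>x. inverse (Up x - U x)) at_top (at_right (-1))"
    proof (rule linear_ode_filterlim_at_top[OF b(1) _ deriv, of "- K"])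
      show "\<forall>y\<in>{-1<..<b}. (A y + - K) * inverse (Up y - U y) \<le> 0"
      proof
        fix y assume y: "y \<in> {-1<..<b}"
        have "\<bar>A y\<bar> \<le> K" using bound y True by simp
        with pos[OF y] show "(A y + - K) * inverse (Up y - U y) \<le> 0"
          by (intro mult_nonpos_nonneg) auto
      qed
    qed (use b in simp)
    from tendsto_inverse_0_at_top[OF this] show ?thesis using True by simp
  next
    case False
    then have s: "sqrt (1 + c1) > 0" using c1 by simp
    have "((\<lambda>x. inverse (Up x - U x)) \<longlongrightarrow> 1 / (4 * sqrt (1 + c1))) (at_right (-1))"
      using pos b by (intro linear_ode_tendsto[OF b(1) _ s b(3) deriv bound]) (auto simp: less_imp_le)
    then show ?thesis using s by (auto dest: tendsto_inverse)
  qed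
  then show ?thesis by simp
qed

lemma C1_solution_tendsto_tau1:
  assumes "c1 \<ge> -1" and "is_Uplus c1 c2 c3 Up" and "C1_solution c1 c2 c3 U"
    and "\<exists>x\<in>{-1<..<1}. U x \<noteq> Up x"
  shows "(\<forall>x\<in>{-1<..<1}. U x < Up x) \<and> (U \<longlongrightarrow> tau1 c1) (at_right (-1))"
proof
  show below: "\<forall>x\<in>{-1<..<1}. U x < Up x"
    using C1_solution_below_Uplus[OF assms] .
  have "((\<lambda>x. Up x - (Up x - U x)) \<longlongrightarrow> tau2 c1 - 4 * sqrt (1 + c1)) (at_right (-1))"
    using is_Uplus_tendsto[OF assms(2)] C1_solution_gap_tendsto[OF assms(1-3) below]
    by (rule tendsto_diff)
  then show "(U \<longlongrightarrow> tau1 c1) (at_right (-1))"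
    by (simp add: tau1_def tau2_def)
qed

lemma is_Uminus_reflect:
  assumes "is_Uminus c1 c2 c3 Um"
  shows "is_Uplus c2 c1 c3 (\<lambda>x. - Um (- x))"
proof -
  obtain \<delta> b where "C1_solution c1 c2 c3 Um" "\<delta> > 0" "b 0 = tau1' c2"
    and sums: "\<forall>x. 1 - \<delta> < x \<and> x < 1 \<longrightarrow> (\<lambda>n. b n * (1 - x)^n) sums Um x"
    using assms unfolding is_Uminus_def by blast
  moreover have "(\<lambda>n. - b n * (1 + x)^n) sums - Um (- x)" if "-1 < x" "x < -1 + \<delta>" for x
    using sums_minus[OF sums[rule_format, of "- x"]] that by simp
  ultimately show ?thesis
    unfolding is_Uplus_def using C1_solution_reflect
    by (intro conjI exI[of _ \<delta>] exI[of _ "\<lambda>n. - b n"]) (auto simp: tau1'_def tau2_def)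
qed

theorem lemma2p8:
  fixes c1 c2 c3 :: real and Up Um U :: "real \<Rightarrow> real"
  assumes "c1 \<ge> -1" and "c2 \<ge> -1" and "c3 > c3bar c1 c2"
    and "is_Uplus c1 c2 c3 Up" and "is_Uminus c1 c2 c3 Um"
    and "C1_solution c1 c2 c3 U"
    and "\<exists>x\<in>{-1<..<1}. U x \<noteq> Up x"
    and "\<exists>x\<in>{-1<..<1}. U x \<noteq> Um x"
  shows "(\<forall>x\<in>{-1<..<1}. Um x < U x \<and> U x < Up x)
    \<and> (U \<longlongrightarrow> tau1 c1) (at_right (-1))
    \<and> (U \<longlongrightarrow> tau2' c2) (at_left 1)"
proof -
  have left: "(\<forall>x\<in>{-1<..<1}. U x < Up x) \<and> (U \<longlongrightarrow> tau1 c1) (at_right (-1))"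
    using C1_solution_tendsto_tau1[OF assms(1,4,6,7)] .
  obtain x where "x \<in> {-1<..<1}" "U x \<noteq> Um x" using assms(8) by blast
  then have "\<exists>x\<in>{-1<..<1}. - U (- x) \<noteq> - Um (- x)" by (intro bexI[of _ "- x"]) auto
  from C1_solution_tendsto_tau1[OF assms(2) is_Uminus_reflect[OF assms(5)] C1_solution_reflect[OF assms(6)] this]
  have right: "(\<forall>x\<in>{-1<..<1}. - U (- x) < - Um (- x)) \<and> ((\<lambda>x. - U (- x)) \<longlongrightarrow> tau1 c2) (at_right (-1))" .
  have "Um x < U x" if "x \<in> {-1<..<1}" for x
  proof -
    have "- x \<in> {-1<..<1}" using that by auto
    with right have "- U (- (- x)) < - Um (- (- x))" by blast
    then show ?thesis by simp
  qed
  moreover have "(U \<longlongrightarrow> tau2' c2) (at_left 1)"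
    using tendsto_minus[OF right[THEN conjunct2]]
    by (simp add: filterlim_at_left_to_right[of U _ 1] tau1_def tau2'_def)
  ultimately show ?thesis using left by blast
qed

end
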